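(* Let $\kappa$ be an infinite cardinal. Then $\clubsuit^{\Diamond}_{\kappa^+}$ implies ${\rm Gal}(\mathscr{D}_{\kappa^+},\kappa^+,\kappa^{++})$.
   Context: For a regular uncountable cardinal $\lambda$, a superclub sequence for $\lambda$ is a sequence $(S_\alpha\mid\alpha<\lambda)$ with $S_\alpha\subseteq\alpha$ for each $\alpha$, such that for every $A\in[\lambda]^\lambda$ there is $B\in[A]^\lambda$ for which $\{\alpha<\lambda\mid B\cap\alpha=S_\alpha\}$ is stationary in $\lambda$; $\clubsuit^{\Diamond}_\lambda$ is the statement that such a sequence exists. $\mathscr{D}_{\kappa^+}$ is the club filter on $\kappa^+$. ${\rm Gal}(\mathscr{D}_{\kappa^+},\kappa^+,\kappa^{++})$ (the Galvin property) means: for every sequence $(C_\alpha\mid\alpha<\kappa^{++})$ of elements of $\mathscr{D}_{\kappa^+}$ there is $I\subseteq\kappa^{++}$ with $|I|=\kappa^+$ such that $\bigcap_{\alpha\in I}C_\alpha\in\mathscr{D}_{\kappa^+}$ (i.e. contains a club of $\kappa^+$). *)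

theory Defs
  imports Main
begin

text \<open>Ordinals/cardinals are represented by well-order relations r; the ordinal's
elements are Field r, and the initial segment below a is underS r a.\<close>

definition unbounded_in :: "'a rel \<Rightarrow> 'a set \<Rightarrow> bool" where
  "unbounded_in r A \<longleftrightarrow> A \<subseteq> Field r \<and> (\<forall>a\<in>Field r. \<exists>b\<in>A. (a, b) \<in> r)"

text \<open>A is closed: every a below the top which is a limit point of A
(i.e. A is cofinal in the nonempty initial segment below a, so sup (A \<inter> a) = a) lies in A.\<close>
definition closed_in :: "'a rel \<Rightarrow> 'a set \<Rightarrow> bool" where
  "closed_in r A \<longleftrightarrow>
     (\<forall>a\<in>Field r. (A \<inter> underS r a \<noteq> {} \<and>
        (\<forall>b\<in>underS r a. \<exists>c\<in>A \<inter> underS r a. c \<noteq> b \<and> (b, c) \<in> r)) \<longrightarrow> a \<in> A)"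

definition club :: "'a rel \<Rightarrow> 'a set \<Rightarrow> bool" where
  "club r C \<longleftrightarrow> C \<subseteq> Field r \<and> closed_in r C \<and> unbounded_in r C"

definition stationary :: "'a rel \<Rightarrow> 'a set \<Rightarrow> bool" where
  "stationary r S \<longleftrightarrow> S \<subseteq> Field r \<and> (\<forall>C. club r C \<longrightarrow> S \<inter> C \<noteq> {})"

definition club_filter :: "'a rel \<Rightarrow> 'a set set" where
  "club_filter r = {D. D \<subseteq> Field r \<and> (\<exists>C. club r C \<and> C \<subseteq> D)}"

definition superclub_seq :: "'a rel \<Rightarrow> ('a \<Rightarrow> 'a set) \<Rightarrow> bool" where
  "superclub_seq r S \<longleftrightarrow>
     (\<forall>\<alpha>\<in>Field r. S \<alpha> \<subseteq> underS r \<alpha>) \<and>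
     (\<forall>A. A \<subseteq> Field r \<and> (card_of A, r) \<in> ordIso \<longrightarrow>
        (\<exists>B. B \<subseteq> A \<and> (card_of B, r) \<in> ordIso \<and>
             stationary r {\<alpha>\<in>Field r. B \<inter> underS r \<alpha> = S \<alpha>}))"

definition clubsuit_diamond :: "'a rel \<Rightarrow> bool" where
  "clubsuit_diamond r \<longleftrightarrow> (\<exists>S. superclub_seq r S)"

definition Galvin :: "'a rel \<Rightarrow> 'b rel \<Rightarrow> bool" where
  "Galvin l m \<longleftrightarrow>
     (\<forall>C :: 'b \<Rightarrow> 'a set. (\<forall>\<alpha>\<in>Field m. C \<alpha> \<in> club_filter l) \<longrightarrow>
        (\<exists>I. I \<subseteq> Field m \<and> (card_of I, l) \<in> ordIso \<and> (\<Inter>\<alpha>\<in>I. C \<alpha>) \<in> club_filter l))"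

end

theory Submission
  imports Defs
begin

text \<open>Let \<open>\<lambda> = \<kappa>\<^sup>+\<close>, let \<open>C \<alpha>\<close> (\<open>\<alpha> < \<mu>\<close>, \<open>\<lambda> < \<mu>\<close>) be clubs and \<open>S\<close> a superclub sequence.
  Each \<open>C \<alpha>\<close> contains some \<open>B \<alpha>\<close> of size \<open>\<lambda>\<close> guessed on the stationary set
  \<open>T \<alpha> = {\<delta>. B \<alpha> \<inter> \<delta> = S \<delta>}\<close>. Only \<open>\<lambda>\<close> many \<open>\<alpha>\<close> lie in a fibre \<open>{\<alpha>. \<delta> \<in> T \<alpha>}\<close> of size
  at most \<open>\<lambda>\<close>, so for some \<open>\<alpha>0\<close> all fibres over \<open>T \<alpha>0\<close> are large, and a recursion along
  \<open>T \<alpha>0\<close> picks distinct \<open>f \<delta>\<close> with \<open>\<delta> \<in> T (f \<delta>)\<close>, i.e. \<open>B (f \<delta>) \<inter> \<delta> = S \<delta> = B \<alpha>0 \<inter> \<delta>\<close>.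
  For \<open>I = f ` T \<alpha>0\<close>, which has size \<open>\<lambda>\<close>, the diagonal intersection of the \<open>C (f \<delta>)\<close> with the
  limit points of \<open>B \<alpha>0\<close> is a club inside every \<open>C \<alpha>\<close>, \<open>\<alpha> \<in> I\<close>: above \<open>\<delta>\<close> by diagonality,
  and at or below \<open>\<delta>\<close> because a limit point of \<open>B \<alpha>0\<close> there is a limit point of \<open>B (f \<delta>)\<close>.\<close>

unbundle cardinal_syntax

definition limit_point :: "'a rel \<Rightarrow> 'a set \<Rightarrow> 'a \<Rightarrow> bool" where
  "limit_point r A a \<longleftrightarrow> a \<in> Field r \<and> A \<inter> underS r a \<noteq> {} \<and>
     (\<forall>b\<in>underS r a. \<exists>c\<in>A \<inter> underS r a. c \<noteq> b \<and> (b, c) \<in> r)"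

lemma closed_in_iff_limit_points: "closed_in r A \<longleftrightarrow> (\<forall>a. limit_point r A a \<longrightarrow> a \<in> A)"
  unfolding closed_in_def limit_point_def by blast

lemma limit_point_mono: "limit_point r A a \<Longrightarrow> A \<subseteq> A' \<Longrightarrow> limit_point r A' a"
  unfolding limit_point_def by blast

lemma limit_point_cong:
  "A \<inter> underS r a = A' \<inter> underS r a \<Longrightarrow> limit_point r A a \<longleftrightarrow> limit_point r A' a"
  unfolding limit_point_def by simp

lemma club_limit_point_mem: "club r A \<Longrightarrow> limit_point r A a \<Longrightarrow> a \<in> A"
  unfolding club_def closed_in_iff_limit_points by blast

locale regular_uncountable =
  fixes r :: "'a rel"
  assumes card_order: "Card_order r"
    and regular: "regularCard r"
    and uncountable: "|UNIV :: nat set| <o r"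
begin

definition less_r :: "'a \<Rightarrow> 'a \<Rightarrow> bool" (infix "\<prec>" 50) where
  "x \<prec> y \<longleftrightarrow> (x, y) \<in> r \<and> x \<noteq> y"

lemma well_order: "Well_order r"
  using card_order unfolding card_order_on_def by simp

lemma refl_r: "x \<in> Field r \<Longrightarrow> (x, x) \<in> r"
  using wo_rel.REFL[of r] well_order unfolding wo_rel_def refl_on_def by blast

lemma trans_r: "(x, y) \<in> r \<Longrightarrow> (y, z) \<in> r \<Longrightarrow> (x, z) \<in> r"
  using wo_rel.TRANS[of r] well_order unfolding wo_rel_def trans_def by blast

lemma antisym_r: "(x, y) \<in> r \<Longrightarrow> (y, x) \<in> r \<Longrightarrow> x = y"
  using wo_rel.ANTISYM[of r] well_order unfolding wo_rel_def antisym_def by blast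

lemma wf_r: "wf (r - Id)"
  using wo_rel.WF[of r] well_order unfolding wo_rel_def by blast

lemma total_r: "x \<in> Field r \<Longrightarrow> y \<in> Field r \<Longrightarrow> (x, y) \<in> r \<or> (y, x) \<in> r"
  using wo_rel.TOTALS[of r] well_order unfolding wo_rel_def by blast

lemma less_r_Field: "x \<prec> y \<Longrightarrow> x \<in> Field r \<and> y \<in> Field r"
  unfolding less_r_def by (auto intro: FieldI1 FieldI2)

lemma less_le_trans: "x \<prec> y \<Longrightarrow> (y, z) \<in> r \<Longrightarrow> x \<prec> z"
  unfolding less_r_def using trans_r antisym_r by blast

lemma le_less_trans: "(x, y) \<in> r \<Longrightarrow> y \<prec> z \<Longrightarrow> x \<prec> z"
  unfolding less_r_def using trans_r antisym_r by blast

lemma less_trans: "x \<prec> y \<Longrightarrow> y \<prec> z \<Longrightarrow> x \<prec> z"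
  using less_le_trans less_r_def by blast

lemma not_less_r: "x \<in> Field r \<Longrightarrow> y \<in> Field r \<Longrightarrow> \<not> x \<prec> y \<Longrightarrow> (y, x) \<in> r"
  unfolding less_r_def using total_r refl_r by blast

lemma underS_eq: "underS r a = {b. b \<prec> a}"
  unfolding underS_def less_r_def by auto

lemma cofinal_iff: "cofinal A r \<longleftrightarrow> (\<forall>x\<in>Field r. \<exists>b\<in>A. x \<prec> b)"
  unfolding cofinal_def less_r_def by blast

lemma infinite_Field: "infinite (Field r)"
proof
  assume "finite (Field r)"
  then have "r <o |UNIV :: nat set|"
    by (intro finite_ordLess_infinite[OF well_order card_of_Well_order]) (simp_all add: Field_card_of)
  then show False
    using uncountable not_ordLess_ordLeq ordLess_imp_ordLeq by blast
qed

lemma exists_greater: "x \<in> Field r \<Longrightarrow> \<exists>y\<in>Field r. x \<prec> y"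
  using infinite_Card_order_limit[OF card_order infinite_Field, of x] unfolding less_r_def by auto

lemma finite_card_less: "finite A \<Longrightarrow> |A| <o r"
  by (intro finite_ordLess_infinite[OF card_of_Well_order well_order _ infinite_Field])
     (simp add: Field_card_of)

lemma card_under_less:
  assumes "x \<in> Field r"
  shows "|under r x| <o r"
proof -
  have "under r x = underS r x \<union> {x}"
    using Refl_under_underS[OF wo_rel.REFL assms] well_order unfolding wo_rel_def by blast
  then show ?thesis
    using card_of_Un_ordLess_infinite_Field[OF infinite_Field card_order
        card_of_underS[OF card_order assms] finite_card_less[of "{x}"]] by simp
qed

lemma card_of_cofinal: "A \<subseteq> Field r \<Longrightarrow> cofinal A r \<Longrightarrow> |A| =o r"
  using regular unfolding regularCard_def by blast

lemma small_subset_bounded: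
  assumes "X \<subseteq> Field r" and "|X| <o r"
  shows "\<exists>a\<in>Field r. \<forall>x\<in>X. x \<prec> a"
proof -
  have "\<not> cofinal X r"
    using assms card_of_cofinal not_ordLess_ordIso by blast
  then obtain a where a: "a \<in> Field r" "\<forall>x\<in>X. \<not> a \<prec> x"
    unfolding cofinal_iff by blast
  obtain a' where a': "a' \<in> Field r" "a \<prec> a'"
    using exists_greater a(1) by blast
  have "\<forall>x\<in>X. x \<prec> a'"
    using a a' assms(1) not_less_r le_less_trans by blast
  then show ?thesis using a'(1) by blast
qed

lemma card_eq_imp_cofinal:
  assumes "A \<subseteq> Field r" and "|A| =o r"
  shows "cofinal A r"
  unfolding cofinal_iff
proof
  fix x assume x: "x \<in> Field r"
  show "\<exists>b\<in>A. x \<prec> b"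
  proof (rule ccontr)
    assume "\<not> (\<exists>b\<in>A. x \<prec> b)"
    then have "A \<subseteq> under r x"
      unfolding under_def using not_less_r[OF x] assms(1) by blast
    then have "|A| <o r"
      using card_of_mono1 card_under_less[OF x] ordLeq_ordLess_trans by blast
    then show False using not_ordLess_ordIso assms(2) by blast
  qed
qed

lemma limit_pointI:
  assumes "b0 \<prec> s" and "\<And>b. b \<prec> s \<Longrightarrow> \<exists>c\<in>A. b \<prec> c \<and> c \<prec> s"
  shows "limit_point r A s"
  unfolding limit_point_def underS_eq
proof (intro conjI ballI)
  show "s \<in> Field r" using less_r_Field assms(1) by blast
  show "A \<inter> {b. b \<prec> s} \<noteq> {}" using assms by blast
  fix b assume "b \<in> {b. b \<prec> s}"
  then obtain c where "c \<in> A" "b \<prec> c" "c \<prec> s" using assms(2) by blast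
  then show "\<exists>c\<in>A \<inter> {b. b \<prec> s}. c \<noteq> b \<and> (b, c) \<in> r"
    unfolding less_r_def by fastforce
qed

lemma limit_point_Field: "limit_point r A a \<Longrightarrow> a \<in> Field r"
  unfolding limit_point_def by blast

lemma limit_point_nonempty: "limit_point r A a \<Longrightarrow> \<exists>c\<in>A. c \<prec> a"
  unfolding limit_point_def underS_eq by blast

lemma limit_pointD: "limit_point r A a \<Longrightarrow> b \<prec> a \<Longrightarrow> \<exists>c\<in>A. b \<prec> c \<and> c \<prec> a"
  unfolding limit_point_def underS_eq less_r_def by blast

lemma limit_point_of_limit_points:
  assumes "limit_point r {a. limit_point r B a} e"
  shows "limit_point r B e"
proof -
  obtain c where "limit_point r B c" "c \<prec> e"
    using limit_point_nonempty[OF assms] by blast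
  then obtain b0 where "b0 \<in> B" "b0 \<prec> c"
    using limit_point_nonempty by blast
  with \<open>c \<prec> e\<close> have "b0 \<prec> e"
    using less_trans by blast
  then show ?thesis
  proof (rule limit_pointI)
    fix b assume "b \<prec> e"
    then obtain c where "limit_point r B c" "b \<prec> c" "c \<prec> e"
      using limit_pointD[OF assms] by blast
    then obtain d where "d \<in> B" "b \<prec> d" "d \<prec> c"
      using limit_pointD by blast
    then show "\<exists>d\<in>B. b \<prec> d \<and> d \<prec> e"
      using less_trans[OF _ \<open>c \<prec> e\<close>] by blast
  qed
qed

lemma funpow_in_Field:
  "a \<in> Field r \<Longrightarrow> (\<And>x. x \<in> Field r \<Longrightarrow> g x \<in> Field r) \<Longrightarrow> (g ^^ n) a \<in> Field r"
  by (induction n) auto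

lemma funpow_mono:
  assumes a: "a \<in> Field r" and g: "\<And>x. x \<in> Field r \<Longrightarrow> g x \<in> Field r \<and> x \<prec> g x"
    and "n \<le> m"
  shows "((g ^^ n) a, (g ^^ m) a) \<in> r"
  using \<open>n \<le> m\<close>
proof (induction m rule: dec_induct)
  case base
  show ?case using refl_r funpow_in_Field a g by blast
next
  case (step m)
  have "(g ^^ m) a \<in> Field r"
    using funpow_in_Field a g by blast
  then have "(g ^^ m) a \<prec> (g ^^ Suc m) a"
    using g by simp
  then show ?case using step.IH trans_r less_r_def by blast
qed

lemma sup_of_funpow:
  assumes a: "a \<in> Field r" and g: "\<And>x. x \<in> Field r \<Longrightarrow> g x \<in> Field r \<and> x \<prec> g x"
  obtains s where "\<And>n. (g ^^ n) a \<prec> s" and "\<And>b. b \<prec> s \<Longrightarrow> \<exists>n. b \<prec> (g ^^ n) a"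
proof -
  have iter: "\<And>n. (g ^^ n) a \<in> Field r"
    using funpow_in_Field a g by blast
  have "|range (\<lambda>n. (g ^^ n) a)| <o r"
    using card_of_image uncountable by (rule ordLeq_ordLess_trans)
  then obtain u where "u \<in> {s\<in>Field r. \<forall>n. (g ^^ n) a \<prec> s}"
    using small_subset_bounded[of "range (\<lambda>n. (g ^^ n) a)"] iter by blast
  then obtain s where s: "s \<in> {s\<in>Field r. \<forall>n. (g ^^ n) a \<prec> s}"
    and least: "\<And>y. (y, s) \<in> r - Id \<Longrightarrow> y \<notin> {s\<in>Field r. \<forall>n. (g ^^ n) a \<prec> s}"
    by (rule wfE_min[OF wf_r]) blast
  show thesis
  proof
    show "(g ^^ n) a \<prec> s" for n using s by blast
    fix b assume b: "b \<prec> s"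
    then have "b \<in> Field r" "(b, s) \<in> r - Id" using less_r_Field less_r_def by auto
    then obtain n where "\<not> (g ^^ n) a \<prec> b" using least by blast
    then have "(b, (g ^^ n) a) \<in> r" using not_less_r iter \<open>b \<in> Field r\<close> by blast
    moreover have "(g ^^ n) a \<prec> (g ^^ Suc n) a" using g[OF iter] by simp
    ultimately have "b \<prec> (g ^^ Suc n) a" by (rule le_less_trans)
    then show "\<exists>n. b \<prec> (g ^^ n) a" by blast
  qed
qed

lemma limit_point_at_sup_of_funpow:
  assumes a: "a \<in> Field r" and g: "\<And>x. x \<in> Field r \<Longrightarrow> g x \<in> Field r \<and> x \<prec> g x"
  obtains s where "a \<prec> s"
    and "\<And>A d. d \<prec> s \<Longrightarrow> (\<And>x. x \<in> Field r \<Longrightarrow> (d, x) \<in> r \<Longrightarrow> \<exists>c\<in>A. x \<prec> c \<and> (c, g x) \<in> r)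
           \<Longrightarrow> limit_point r A s"
proof -
  have iter: "\<And>n. (g ^^ n) a \<in> Field r"
    using funpow_in_Field a g by blast
  obtain s where above: "\<And>n. (g ^^ n) a \<prec> s" and below: "\<And>b. b \<prec> s \<Longrightarrow> \<exists>n. b \<prec> (g ^^ n) a"
    using sup_of_funpow[OF a g] by blast
  show thesis
  proof
    show "a \<prec> s" using above[of 0] by simp
    fix A d
    assume d: "d \<prec> s" and meets: "\<And>x. x \<in> Field r \<Longrightarrow> (d, x) \<in> r \<Longrightarrow> \<exists>c\<in>A. x \<prec> c \<and> (c, g x) \<in> r"
    show "limit_point r A s"
    proof (rule limit_pointI[OF d])
      fix b assume "b \<prec> s"
      then obtain n m where n: "b \<prec> (g ^^ n) a" and m: "d \<prec> (g ^^ m) a"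
        using below d by blast
      define x where "x = (g ^^ max n m) a"
      have "b \<prec> x"
        using less_le_trans[OF n funpow_mono[OF a g, of n "max n m"]] x_def by simp
      have "d \<prec> x"
        using less_le_trans[OF m funpow_mono[OF a g, of m "max n m"]] x_def by simp
      then have "(d, x) \<in> r" unfolding less_r_def by blast
      moreover obtain c where "c \<in> A" "x \<prec> c" "(c, g x) \<in> r"
        using meets[OF _ \<open>(d, x) \<in> r\<close>] iter x_def by blast
      moreover have "g x \<prec> s" using above[of "Suc (max n m)"] unfolding x_def by simp
      ultimately show "\<exists>c\<in>A. b \<prec> c \<and> c \<prec> s"
        using less_trans[OF \<open>b \<prec> x\<close>] le_less_trans by blast
    qed
  qed
qed

lemma closing_function:
  assumes "\<And>x. x \<in> Field r \<Longrightarrow> W x \<subseteq> Field r \<and> |W x| <o r"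
  obtains g where "\<And>x. x \<in> Field r \<Longrightarrow> g x \<in> Field r \<and> x \<prec> g x \<and> (\<forall>w\<in>W x. w \<prec> g x)"
proof -
  have "\<forall>x\<in>Field r. \<exists>y. y \<in> Field r \<and> (\<forall>w\<in>insert x (W x). w \<prec> y)"
  proof
    fix x assume x: "x \<in> Field r"
    have "|insert x (W x)| <o r"
      using card_of_Un_ordLess_infinite_Field[OF infinite_Field card_order
          finite_card_less[of "{x}"] conjunct2[OF assms[OF x]]] by simp
    moreover have "insert x (W x) \<subseteq> Field r" using assms x by blast
    ultimately show "\<exists>y. y \<in> Field r \<and> (\<forall>w\<in>insert x (W x). w \<prec> y)"
      using small_subset_bounded by blast
  qed
  then obtain g where "\<forall>x\<in>Field r. g x \<in> Field r \<and> (\<forall>w\<in>insert x (W x). w \<prec> g x)"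
    by (rule bchoice[THEN exE])
  then have "\<And>x. x \<in> Field r \<Longrightarrow> g x \<in> Field r \<and> x \<prec> g x \<and> (\<forall>w\<in>W x. w \<prec> g x)"
    by simp
  then show thesis by (rule that)
qed

definition next_in :: "'a set \<Rightarrow> 'a \<Rightarrow> 'a" where
  "next_in A x = (SOME c. c \<in> A \<and> x \<prec> c)"

lemma next_in: "cofinal A r \<Longrightarrow> x \<in> Field r \<Longrightarrow> next_in A x \<in> A \<and> x \<prec> next_in A x"
  unfolding next_in_def cofinal_iff by (rule someI_ex) blast

lemma club_cofinal: "club r C \<Longrightarrow> cofinal C r"
  unfolding club_def unbounded_in_def cofinal_iff using exists_greater less_le_trans by blast

lemma club_limit_points:
  assumes B: "B \<subseteq> Field r" "cofinal B r"
  shows "club r {a. limit_point r B a}"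
  unfolding club_def
proof (intro conjI)
  show sub: "{a. limit_point r B a} \<subseteq> Field r"
    using limit_point_Field by blast
  show "closed_in r {a. limit_point r B a}"
    unfolding closed_in_iff_limit_points using limit_point_of_limit_points by blast
  show "unbounded_in r {a. limit_point r B a}"
    unfolding unbounded_in_def
  proof (intro conjI ballI sub)
    fix a assume a: "a \<in> Field r"
    have g: "\<And>x. x \<in> Field r \<Longrightarrow> next_in B x \<in> Field r \<and> x \<prec> next_in B x"
      using next_in[OF B(2)] B(1) by blast
    obtain s where "a \<prec> s" and lim: "\<And>A d. d \<prec> s \<Longrightarrow>
        (\<And>x. x \<in> Field r \<Longrightarrow> (d, x) \<in> r \<Longrightarrow> \<exists>c\<in>A. x \<prec> c \<and> (c, next_in B x) \<in> r)
        \<Longrightarrow> limit_point r A s"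
      using limit_point_at_sup_of_funpow[OF a g] by blast
    have "limit_point r B s"
    proof (rule lim[OF \<open>a \<prec> s\<close>])
      fix x assume "x \<in> Field r"
      then show "\<exists>c\<in>B. x \<prec> c \<and> (c, next_in B x) \<in> r"
        using next_in[OF B(2)] g refl_r by blast
    qed
    then show "\<exists>b\<in>{a. limit_point r B a}. (a, b) \<in> r"
      using \<open>a \<prec> s\<close> unfolding less_r_def by blast
  qed
qed

lemma club_above:
  assumes a: "a \<in> Field r"
  shows "club r {x\<in>Field r. a \<prec> x}"
  unfolding club_def
proof (intro conjI)
  show "closed_in r {x\<in>Field r. a \<prec> x}"
    unfolding closed_in_iff_limit_points
    using limit_point_nonempty limit_point_Field less_trans by blast
  show "unbounded_in r {x\<in>Field r. a \<prec> x}"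
    unfolding unbounded_in_def
  proof (intro conjI ballI)
    fix x assume "x \<in> Field r"
    then obtain y where "y \<in> Field r" "x \<prec> y" "a \<prec> y"
      using small_subset_bounded[of "{x, a}"] finite_card_less[of "{x, a}"] a by auto
    then show "\<exists>b\<in>{x\<in>Field r. a \<prec> x}. (x, b) \<in> r"
      unfolding less_r_def by blast
  qed simp
qed simp

lemma stationary_cofinal: "stationary r T \<Longrightarrow> cofinal T r"
  unfolding cofinal_iff stationary_def using club_above by blast

lemma closed_diagonal_intersection:
  assumes C0: "closed_in r C0" and D: "\<And>d. d \<in> X \<Longrightarrow> closed_in r (D d)"
  shows "closed_in r {e\<in>C0. \<forall>d\<in>X. d \<prec> e \<longrightarrow> e \<in> D d}"
  unfolding closed_in_iff_limit_points
proof (intro allI impI)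
  let ?E = "{e\<in>C0. \<forall>d\<in>X. d \<prec> e \<longrightarrow> e \<in> D d}"
  fix e assume e: "limit_point r ?E e"
  have "e \<in> D d" if d: "d \<in> X" "d \<prec> e" for d
  proof -
    have "limit_point r (D d) e"
    proof (rule limit_pointI[OF d(2)])
      fix b assume "b \<prec> e"
      have "b \<in> Field r" "d \<in> Field r"
        using less_r_Field \<open>b \<prec> e\<close> d(2) by blast+
      then consider "(b, d) \<in> r" | "(d, b) \<in> r"
        using total_r by blast
      then obtain b' where b': "(b, b') \<in> r" "(d, b') \<in> r" "b' \<prec> e"
      proof cases
        case 1
        then show thesis using that refl_r \<open>d \<in> Field r\<close> d(2) by blast
      next
        case 2
        then show thesis using that refl_r \<open>b \<in> Field r\<close> \<open>b \<prec> e\<close> by blast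
      qed
      then obtain c where "c \<in> ?E" "b' \<prec> c" "c \<prec> e"
        using limit_pointD[OF e] by blast
      then show "\<exists>c\<in>D d. b \<prec> c \<and> c \<prec> e"
        using le_less_trans[OF b'(1)] le_less_trans[OF b'(2)] d(1) by blast
    qed
    then show "e \<in> D d" using D[OF d(1)] unfolding closed_in_iff_limit_points by blast
  qed
  moreover have "e \<in> C0"
    using limit_point_mono[OF e] C0 unfolding closed_in_iff_limit_points by blast
  ultimately show "e \<in> ?E" by blast
qed

lemma diagonal_intersection_club:
  assumes C0: "club r C0" and D: "\<And>d. d \<in> X \<Longrightarrow> club r (D d)"
  shows "club r {e\<in>C0. \<forall>d\<in>X. d \<prec> e \<longrightarrow> e \<in> D d}"
  unfolding club_def
proof (intro conjI)
  let ?E = "{e\<in>C0. \<forall>d\<in>X. d \<prec> e \<longrightarrow> e \<in> D d}"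
  show sub: "?E \<subseteq> Field r" using C0 unfolding club_def by blast
  show "closed_in r ?E"
    using closed_diagonal_intersection C0 D unfolding club_def by blast
  show "unbounded_in r ?E"
    unfolding unbounded_in_def
  proof (intro conjI ballI sub)
    fix a assume a: "a \<in> Field r"
    define W where "W x = insert (next_in C0 x) ((\<lambda>d. next_in (D d) x) ` (X \<inter> under r x))" for x
    have "W x \<subseteq> Field r \<and> |W x| <o r" if x: "x \<in> Field r" for x
    proof
      show "W x \<subseteq> Field r"
        unfolding W_def using next_in club_cofinal C0 D x less_r_Field by blast
      have "|(\<lambda>d. next_in (D d) x) ` (X \<inter> under r x)| \<le>o |X \<inter> under r x|"
        by (rule card_of_image)
      also have "|X \<inter> under r x| \<le>o |under r x|"
        by (rule card_of_mono1) blast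
      finally have "|(\<lambda>d. next_in (D d) x) ` (X \<inter> under r x)| <o r"
        using card_under_less[OF x] by (rule ordLeq_ordLess_trans)
      then show "|W x| <o r"
        unfolding W_def using card_of_Un_ordLess_infinite_Field[OF infinite_Field card_order
            finite_card_less[of "{next_in C0 x}"]] by simp
    qed
    then obtain g where g: "\<And>x. x \<in> Field r \<Longrightarrow> g x \<in> Field r \<and> x \<prec> g x \<and> (\<forall>w\<in>W x. w \<prec> g x)"
      using closing_function by blast
    obtain s where "a \<prec> s" and lim: "\<And>A d. d \<prec> s \<Longrightarrow>
        (\<And>x. x \<in> Field r \<Longrightarrow> (d, x) \<in> r \<Longrightarrow> \<exists>c\<in>A. x \<prec> c \<and> (c, g x) \<in> r)
        \<Longrightarrow> limit_point r A s"
      using limit_point_at_sup_of_funpow[OF a] g by blast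
    have "limit_point r C0 s"
    proof (rule lim[OF \<open>a \<prec> s\<close>])
      fix x assume x: "x \<in> Field r"
      have "next_in C0 x \<in> W x" unfolding W_def by simp
      then have "(next_in C0 x, g x) \<in> r" using g[OF x] unfolding less_r_def by blast
      then show "\<exists>c\<in>C0. x \<prec> c \<and> (c, g x) \<in> r"
        using next_in[OF club_cofinal[OF C0] x] by blast
    qed
    then have "s \<in> C0" by (rule club_limit_point_mem[OF C0])
    moreover have "limit_point r (D d) s" if d: "d \<in> X" "d \<prec> s" for d
    proof (rule lim[OF d(2)])
      fix x assume x: "x \<in> Field r" and "(d, x) \<in> r"
      then have "next_in (D d) x \<in> W x" using d(1) unfolding W_def under_def by blast
      then have "(next_in (D d) x, g x) \<in> r" using g[OF x] unfolding less_r_def by blast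
      then show "\<exists>c\<in>D d. x \<prec> c \<and> (c, g x) \<in> r"
        using next_in[OF club_cofinal[OF D[OF d(1)]] x] by blast
    qed
    ultimately have "s \<in> ?E"
      using club_limit_point_mem[OF D] by blast
    then show "\<exists>b\<in>?E. (a, b) \<in> r"
      using \<open>a \<prec> s\<close> unfolding less_r_def by blast
  qed
qed

lemma index_with_large_fibres:
  fixes T :: "'b \<Rightarrow> 'a set"
  assumes T: "\<And>\<alpha>. \<alpha> \<in> A \<Longrightarrow> T \<alpha> \<subseteq> Field r" and A: "r <o |A|"
  obtains \<alpha>0 where "\<alpha>0 \<in> A" and "\<And>d. d \<in> T \<alpha>0 \<Longrightarrow> r <o |{\<alpha>\<in>A. d \<in> T \<alpha>}|"
proof -
  define K where "K d = {\<alpha>\<in>A. d \<in> T \<alpha>}" for d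
  define Small where "Small = {d\<in>Field r. |K d| \<le>o r}"
  have r_Field: "r =o |Field r|"
    using card_of_Field_ordIso[OF card_order] by (rule ordIso_symmetric)
  have "|\<Union>d\<in>Small. K d| \<le>o |Field r|"
  proof (rule card_of_UNION_ordLeq_infinite[OF infinite_Field])
    show "|Small| \<le>o |Field r|" unfolding Small_def by (rule card_of_mono1) blast
    show "\<forall>d\<in>Small. |K d| \<le>o |Field r|"
    proof
      fix d assume "d \<in> Small"
      then have "|K d| \<le>o r" unfolding Small_def by blast
      then show "|K d| \<le>o |Field r|" using r_Field by (rule ordLeq_ordIso_trans)
    qed
  qed
  then have "|\<Union>d\<in>Small. K d| \<le>o r"
    using ordIso_symmetric[OF r_Field] by (rule ordLeq_ordIso_trans)
  have "\<not> A \<subseteq> (\<Union>d\<in>Small. K d)"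
  proof
    assume "A \<subseteq> (\<Union>d\<in>Small. K d)"
    then have "|A| \<le>o |\<Union>d\<in>Small. K d|" by (rule card_of_mono1)
    then have "|A| \<le>o r"
      using \<open>|\<Union>d\<in>Small. K d| \<le>o r\<close> by (rule ordLeq_transitive)
    then show False using A not_ordLess_ordLeq by blast
  qed
  then obtain \<alpha>0 where \<alpha>0: "\<alpha>0 \<in> A" "\<alpha>0 \<notin> (\<Union>d\<in>Small. K d)" by blast
  show thesis
  proof (rule that[OF \<alpha>0(1)])
    fix d assume d: "d \<in> T \<alpha>0"
    then have "d \<notin> Small" using \<alpha>0 unfolding K_def by blast
    moreover have "d \<in> Field r" using T[OF \<alpha>0(1)] d by blast
    ultimately have "\<not> |K d| \<le>o r" unfolding Small_def by blast
    then have "r <o |K d|"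
      by (rule iffD1[OF not_ordLeq_iff_ordLess[OF well_order card_of_Well_order]])
    then show "r <o |{\<alpha>\<in>A. d \<in> T \<alpha>}|" unfolding K_def .
  qed
qed

lemma inj_choice_from_large_sets:
  assumes T: "T \<subseteq> Field r" and K: "\<And>d. d \<in> T \<Longrightarrow> r \<le>o |K d|"
  obtains f where "inj_on f T" and "\<And>d. d \<in> T \<Longrightarrow> f d \<in> K d"
proof -
  define H where "H h d = (SOME x. x \<in> K d \<and> x \<notin> h ` (T \<inter> underS r d))" for h d
  define f where "f = wfrec (r - Id) H"
  have f_eq: "f d = (SOME x. x \<in> K d \<and> x \<notin> f ` (T \<inter> underS r d))" for d
  proof -
    have "f d = H (cut f (r - Id) d) d"
      unfolding f_def by (rule wfrec[OF wf_r])
    moreover have "cut f (r - Id) d ` (T \<inter> underS r d) = f ` (T \<inter> underS r d)"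
      by (rule image_cong[OF HOL.refl cut_apply]) (auto simp: underS_def)
    ultimately show ?thesis unfolding H_def by simp
  qed
  have f: "f d \<in> K d \<and> f d \<notin> f ` (T \<inter> underS r d)" if d: "d \<in> T" for d
  proof -
    have "|f ` (T \<inter> underS r d)| \<le>o |T \<inter> underS r d|" by (rule card_of_image)
    also have "|T \<inter> underS r d| \<le>o |underS r d|" by (rule card_of_mono1) blast
    also have "|underS r d| <o r"
      using card_of_underS[OF card_order] d T by blast
    finally have small: "|f ` (T \<inter> underS r d)| <o r" .
    have "\<not> K d \<subseteq> f ` (T \<inter> underS r d)"
    proof
      assume "K d \<subseteq> f ` (T \<inter> underS r d)"
      then have "r \<le>o |f ` (T \<inter> underS r d)|"
        using K[OF d] card_of_mono1 by (blast intro: ordLeq_transitive)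
      then show False using small not_ordLess_ordLeq by blast
    qed
    then have "\<exists>x. x \<in> K d \<and> x \<notin> f ` (T \<inter> underS r d)" by blast
    then show ?thesis unfolding f_eq[of d] by (rule someI_ex)
  qed
  have "inj_on f T"
  proof (rule inj_onI, rule ccontr)
    fix x y assume xy: "x \<in> T" "y \<in> T" "f x = f y" "x \<noteq> y"
    then consider "x \<in> underS r y" | "y \<in> underS r x"
      using total_r T unfolding underS_def by blast
    then show False
    proof cases
      case 1
      then have "f y \<in> f ` (T \<inter> underS r y)" using xy(1,3) by (metis IntI imageI)
      then show False using f[OF xy(2)] by blast
    next
      case 2
      then have "f x \<in> f ` (T \<inter> underS r x)" using xy(2,3) by (metis IntI imageI)
      then show False using f[OF xy(1)] by blast
    qed
  qed
  moreover have "\<And>d. d \<in> T \<Longrightarrow> f d \<in> K d" using f by blast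
  ultimately show thesis by (rule that)
qed

lemma club_inside_agreeing_clubs:
  assumes B0: "B0 \<subseteq> Field r" "cofinal B0 r" and T: "T \<subseteq> Field r"
    and D: "\<And>\<delta>. \<delta> \<in> T \<Longrightarrow> club r (D \<delta>)"
    and B: "\<And>\<delta>. \<delta> \<in> T \<Longrightarrow> B \<delta> \<subseteq> D \<delta> \<and> B \<delta> \<inter> underS r \<delta> = B0 \<inter> underS r \<delta>"
  obtains E where "club r E" and "E \<subseteq> (\<Inter>\<delta>\<in>T. D \<delta>)"
proof
  let ?E = "{e\<in>{a. limit_point r B0 a}. \<forall>\<delta>\<in>T. \<delta> \<prec> e \<longrightarrow> e \<in> D \<delta>}"
  show "club r ?E"
    using diagonal_intersection_club[OF club_limit_points[OF B0]] D by blast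
  show "?E \<subseteq> (\<Inter>\<delta>\<in>T. D \<delta>)"
  proof (intro subsetI INT_I)
    fix e \<delta> assume e: "e \<in> ?E" and \<delta>: "\<delta> \<in> T"
    show "e \<in> D \<delta>"
    proof (cases "\<delta> \<prec> e")
      case True
      then show ?thesis using e \<delta> by blast
    next
      case False
      then have "(e, \<delta>) \<in> r"
        using not_less_r T \<delta> limit_point_Field e by blast
      then have "underS r e \<subseteq> underS r \<delta>"
        unfolding underS_eq using less_le_trans by blast
      then have "B \<delta> \<inter> underS r e = B0 \<inter> underS r e"
        using B[OF \<delta>] by blast
      moreover have "limit_point r B0 e" using e by blast
      ultimately have "limit_point r (B \<delta>) e"
        using limit_point_cong by metis
      then have "limit_point r (D \<delta>) e"
        using B[OF \<delta>] by (blast intro: limit_point_mono)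
      then show ?thesis by (rule club_limit_point_mem[OF D[OF \<delta>]])
    qed
  qed
qed

lemma superclub_subset:
  assumes S: "superclub_seq r S" and C: "club r C"
  obtains B where "B \<subseteq> C" and "|B| =o r" and "stationary r {\<delta>\<in>Field r. B \<inter> underS r \<delta> = S \<delta>}"
proof -
  have "C \<subseteq> Field r" using C unfolding club_def by blast
  moreover have "|C| =o r"
    using card_of_cofinal club_cofinal C calculation by blast
  ultimately show thesis
    using S that unfolding superclub_seq_def by blast
qed


lemma club_inside_many_guessed_clubs:
  assumes A: "r <o |A|"
    and D: "\<And>\<alpha>. \<alpha> \<in> A \<Longrightarrow> club r (D \<alpha>) \<and> B \<alpha> \<subseteq> D \<alpha> \<and> |B \<alpha>| =o r"
    and guessed: "\<And>\<alpha>. \<alpha> \<in> A \<Longrightarrow> stationary r {\<delta>\<in>Field r. B \<alpha> \<inter> underS r \<delta> = S \<delta>}"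
  obtains I E where "I \<subseteq> A" "I \<noteq> {}" "|I| =o r" "club r E" "E \<subseteq> (\<Inter>\<alpha>\<in>I. D \<alpha>)"
proof -
  define T where "T \<alpha> = {\<delta>\<in>Field r. B \<alpha> \<inter> underS r \<delta> = S \<delta>}" for \<alpha>
  obtain \<alpha>0 where \<alpha>0: "\<alpha>0 \<in> A" and large: "\<And>\<delta>. \<delta> \<in> T \<alpha>0 \<Longrightarrow> r <o |{\<alpha>\<in>A. \<delta> \<in> T \<alpha>}|"
    using index_with_large_fibres[of A T] A unfolding T_def by blast
  have T0: "T \<alpha>0 \<subseteq> Field r" "cofinal (T \<alpha>0) r"
    using guessed[OF \<alpha>0] stationary_cofinal unfolding T_def by auto
  obtain f where f: "inj_on f (T \<alpha>0)" "\<And>\<delta>. \<delta> \<in> T \<alpha>0 \<Longrightarrow> f \<delta> \<in> A \<and> \<delta> \<in> T (f \<delta>)"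
  proof (rule inj_choice_from_large_sets[OF T0(1), of "\<lambda>\<delta>. {\<alpha>\<in>A. \<delta> \<in> T \<alpha>}"])
    show "r \<le>o |{\<alpha>\<in>A. \<delta> \<in> T \<alpha>}|" if "\<delta> \<in> T \<alpha>0" for \<delta>
      using large[OF that] by (rule ordLess_imp_ordLeq)
  qed blast
  have B0: "B \<alpha>0 \<subseteq> Field r" "cofinal (B \<alpha>0) r"
  proof -
    show "B \<alpha>0 \<subseteq> Field r" using D[OF \<alpha>0] unfolding club_def by blast
    then show "cofinal (B \<alpha>0) r" using D[OF \<alpha>0] card_eq_imp_cofinal by blast
  qed
  obtain E where E: "club r E" "E \<subseteq> (\<Inter>\<delta>\<in>T \<alpha>0. D (f \<delta>))"
  proof (rule club_inside_agreeing_clubs[OF B0 T0(1), of "D \<circ> f" "B \<circ> f"])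
    fix \<delta> assume "\<delta> \<in> T \<alpha>0"
    then show "club r ((D \<circ> f) \<delta>)" and
      "(B \<circ> f) \<delta> \<subseteq> (D \<circ> f) \<delta> \<and> (B \<circ> f) \<delta> \<inter> underS r \<delta> = B \<alpha>0 \<inter> underS r \<delta>"
      using f(2) D unfolding T_def by auto
  qed auto
  show thesis
  proof (rule that)
    show "f ` T \<alpha>0 \<subseteq> A" using f(2) by blast
    obtain x where "x \<in> Field r" using infinite_Field by (metis finite.emptyI ex_in_conv)
    then show "f ` T \<alpha>0 \<noteq> {}"
      using T0(2) unfolding cofinal_iff by blast
    have "|f ` T \<alpha>0| =o |T \<alpha>0|"
      using card_of_ordIso inj_on_imp_bij_betw[OF f(1)] ordIso_symmetric by blast
    then show "|f ` T \<alpha>0| =o r"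
      using card_of_cofinal[OF T0] by (rule ordIso_transitive)
    show "club r E" by (rule E(1))
    show "E \<subseteq> (\<Inter>\<alpha>\<in>f ` T \<alpha>0. D \<alpha>)" using E(2) by blast
  qed
qed

theorem superclub_imp_Galvin:
  assumes S: "superclub_seq r S" and m: "r <o |Field m|"
  shows "Galvin r m"
  unfolding Galvin_def
proof (intro allI impI)
  fix C :: "'b \<Rightarrow> 'a set"
  assume C: "\<forall>\<alpha>\<in>Field m. C \<alpha> \<in> club_filter r"
  then have "\<forall>\<alpha>\<in>Field m. \<exists>D. club r D \<and> D \<subseteq> C \<alpha>"
    unfolding club_filter_def by blast
  then obtain D where D: "\<forall>\<alpha>\<in>Field m. club r (D \<alpha>) \<and> D \<alpha> \<subseteq> C \<alpha>"
    by (rule bchoice[THEN exE])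
  have "\<forall>\<alpha>\<in>Field m. \<exists>B. B \<subseteq> D \<alpha> \<and> |B| =o r \<and> stationary r {\<delta>\<in>Field r. B \<inter> underS r \<delta> = S \<delta>}"
  proof
    fix \<alpha> assume "\<alpha> \<in> Field m"
    then have "club r (D \<alpha>)" using D by blast
    then obtain B where "B \<subseteq> D \<alpha>" "|B| =o r" "stationary r {\<delta>\<in>Field r. B \<inter> underS r \<delta> = S \<delta>}"
      by (rule superclub_subset[OF S])
    then show "\<exists>B. B \<subseteq> D \<alpha> \<and> |B| =o r \<and> stationary r {\<delta>\<in>Field r. B \<inter> underS r \<delta> = S \<delta>}"
      by blast
  qed
  then obtain B where B: "\<forall>\<alpha>\<in>Field m. B \<alpha> \<subseteq> D \<alpha> \<and> |B \<alpha>| =o r \<and>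
      stationary r {\<delta>\<in>Field r. B \<alpha> \<inter> underS r \<delta> = S \<delta>}"
    by (rule bchoice[THEN exE])
  obtain I E where I: "I \<subseteq> Field m" "I \<noteq> {}" "|I| =o r" and E: "club r E" "E \<subseteq> (\<Inter>\<alpha>\<in>I. D \<alpha>)"
  proof (rule club_inside_many_guessed_clubs[OF m])
    fix \<alpha> assume "\<alpha> \<in> Field m"
    then show "club r (D \<alpha>) \<and> B \<alpha> \<subseteq> D \<alpha> \<and> |B \<alpha>| =o r"
      and "stationary r {\<delta>\<in>Field r. B \<alpha> \<inter> underS r \<delta> = S \<delta>}"
      using B D by blast+
  qed (rule that)
  obtain \<alpha> where "\<alpha> \<in> I" using I(2) by blast
  then have "(\<Inter>\<alpha>\<in>I. C \<alpha>) \<subseteq> C \<alpha>" and "C \<alpha> \<subseteq> Field r"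
    using I(1) C unfolding club_filter_def by blast+
  then have "(\<Inter>\<alpha>\<in>I. C \<alpha>) \<subseteq> Field r" by blast
  moreover have "E \<subseteq> (\<Inter>\<alpha>\<in>I. C \<alpha>)"
    using E(2) I(1) D by blast
  ultimately have "(\<Inter>\<alpha>\<in>I. C \<alpha>) \<in> club_filter r"
    unfolding club_filter_def using E(1) by blast
  then show "\<exists>I. I \<subseteq> Field m \<and> |I| =o r \<and> (\<Inter>\<alpha>\<in>I. C \<alpha>) \<in> club_filter r"
    using I by blast
qed

end

lemma regular_uncountable_cardSuc:
  assumes "Card_order k" and "infinite (Field k)"
  shows "regular_uncountable (cardSuc k)"
proof
  show "Card_order (cardSuc k)" using cardSuc_Card_order[OF assms(1)] .
  show "regularCard (cardSuc k)" using infinite_cardSuc_regularCard assms by blast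
  have "|UNIV :: nat set| \<le>o |Field k|" using infinite_iff_card_of_nat assms(2) by blast
  also have "|Field k| =o k" by (rule card_of_Field_ordIso[OF assms(1)])
  finally show "|UNIV :: nat set| <o cardSuc k"
    using cardSuc_greater[OF assms(1)] by (rule ordLeq_ordLess_trans)
qed

theorem theorem2p2:
  fixes k :: "'k rel"
  assumes "Card_order k" and "infinite (Field k)"
  shows "clubsuit_diamond (cardSuc k) \<longrightarrow> Galvin (cardSuc k) (cardSuc (cardSuc k))"
proof
  assume "clubsuit_diamond (cardSuc k)"
  then obtain S where S: "superclub_seq (cardSuc k) S"
    unfolding clubsuit_diamond_def by blast
  have card: "Card_order (cardSuc k)" by (rule cardSuc_Card_order[OF assms(1)])
  have "cardSuc k <o |Field (cardSuc (cardSuc k))|"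
    using cardSuc_greater[OF card]
      ordIso_symmetric[OF card_of_Field_ordIso[OF cardSuc_Card_order[OF card]]]
    by (rule ordLess_ordIso_trans)
  then show "Galvin (cardSuc k) (cardSuc (cardSuc k))"
    using regular_uncountable.superclub_imp_Galvin[OF regular_uncountable_cardSuc[OF assms] S] by blast
qed

end
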